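(* Let $\underline a=\{a_i\}_{i\in I}$ be a pseudo-Cauchy sequence in $K$ of algebraic type and let $F,G$ be two distinct monic polynomials of smallest degree among polynomials not fixed by $\underline a$. Then $\mu_{F,\infty}\neq\mu_{G,\infty}$.
   Context: $(K,v)$ is a valued field. A pseudo-Cauchy sequence is $\underline a=\{a_i\}_{i\in I}\subseteq K$, $I$ well-ordered with at least two elements, $v(a_i-a_j)<v(a_j-a_k)$ for $i<j<k$. $I^*=I\setminus\{\max I\}$ if $I$ has a maximum, else $I^*=I$. $\gamma_i=v(a_{i+1}-a_i)$ and $\nu_i=v_{a_i,\gamma_i}$ for $i\in I^*$, with $v_{a,\gamma}(\sum_k b_k(x-a)^k)=\min_k\{v(b_k)+k\gamma\}$. A polynomial $f$ is fixed by $\underline a$ if $\{v(f(a_i))\}_{i\in I}$ is ultimately constant; $\underline a$ is of algebraic type if $I^*$ has no maximum and some polynomial is not fixed by $\underline a$. For $F$ monic of smallest degree not fixed by $\underline a$ and $g$ with $\deg g<\deg F$, $\nu_i(g)$ is ultimately constant; call this value $\nu_{\mathfrak v}(g)$. Then $\mu_{F,\infty}(f)=\min_{0\le j\le r}\{\nu_{\mathfrak v}(f_j)+j\cdot\infty\}$, i.e. $\mu_{F,\infty}(f)=\nu_{\mathfrak v}(f_0)$, where $f=\sum_{j=0}^r f_jF^j$ with $\deg f_j<\deg F$ is the $F$-expansion of $f$; it is a valuation on $K[x]$ with $\mu_{F,\infty}(F)=\infty$. *)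

theory Defs
  imports "HOL-Computational_Algebra.Polynomial" "HOL-Library.Extended"
begin

definition valuation :: "('k::field \<Rightarrow> 'g::linordered_ab_group_add extended) \<Rightarrow> bool" where
  "valuation v \<longleftrightarrow>
     (\<forall>x. v x \<noteq> Minf) \<and>
     (\<forall>x. v x = Pinf \<longleftrightarrow> x = 0) \<and>
     (\<forall>x y. v (x * y) = v x + v y) \<and>
     (\<forall>x y. min (v x) (v y) \<le> v (x + y))"

definition pseudo_cauchy ::
  "('k::field \<Rightarrow> 'g::linordered_ab_group_add extended) \<Rightarrow> ('i::wellorder) set \<Rightarrow> ('i \<Rightarrow> 'k) \<Rightarrow> bool" where
  "pseudo_cauchy v I a \<longleftrightarrow>
     (\<exists>i\<in>I. \<exists>j\<in>I. i \<noteq> j) \<and>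
     (\<forall>i\<in>I. \<forall>j\<in>I. \<forall>k\<in>I. i < j \<longrightarrow> j < k \<longrightarrow> v (a i - a j) < v (a j - a k))"

text \<open>I* = I minus its maximum (if any): exactly the elements having a larger element in I.\<close>

definition Istar :: "('i::wellorder) set \<Rightarrow> 'i set" where
  "Istar I = {i\<in>I. \<exists>j\<in>I. i < j}"

definition isucc :: "('i::wellorder) set \<Rightarrow> 'i \<Rightarrow> 'i" where
  "isucc I i = (LEAST j. j \<in> I \<and> i < j)"

definition nat_scale :: "nat \<Rightarrow> 'g::comm_monoid_add \<Rightarrow> 'g" where
  "nat_scale k \<gamma> = (\<Sum>_<k. \<gamma>)"

text \<open>Monomial valuation v_{a,gamma}(\<Sum> b_k (x-a)^k) = min_k (v b_k + k\<gamma>);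
  the b_k are the coefficients of f(x+a).\<close>

definition vmono ::
  "('k::field \<Rightarrow> 'g::linordered_ab_group_add extended) \<Rightarrow> 'k \<Rightarrow> 'g extended \<Rightarrow> 'k poly \<Rightarrow> 'g extended" where
  "vmono v a \<gamma> f =
     Min ((\<lambda>k. v (coeff (pcompose f [:a, 1:]) k) + nat_scale k \<gamma>) ` {..degree f})"

definition gam :: "('k::field \<Rightarrow> 'g::linordered_ab_group_add extended) \<Rightarrow> ('i::wellorder) set \<Rightarrow> ('i \<Rightarrow> 'k) \<Rightarrow> 'i \<Rightarrow> 'g extended" where
  "gam v I a i = v (a (isucc I i) - a i)"

definition nu_i :: "('k::field \<Rightarrow> 'g::linordered_ab_group_add extended) \<Rightarrow> ('i::wellorder) set \<Rightarrow> ('i \<Rightarrow> 'k) \<Rightarrow> 'i \<Rightarrow> 'k poly \<Rightarrow> 'g extended" where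
  "nu_i v I a i = vmono v (a i) (gam v I a i)"

definition fixed_by ::
  "('k::field \<Rightarrow> 'g::linordered_ab_group_add extended) \<Rightarrow> ('i::wellorder) set \<Rightarrow> ('i \<Rightarrow> 'k) \<Rightarrow> 'k poly \<Rightarrow> bool" where
  "fixed_by v I a f \<longleftrightarrow>
     (\<exists>i0\<in>I. \<forall>i\<in>I. i0 \<le> i \<longrightarrow> v (poly f (a i)) = v (poly f (a i0)))"

definition algebraic_type ::
  "('k::field \<Rightarrow> 'g::linordered_ab_group_add extended) \<Rightarrow> ('i::wellorder) set \<Rightarrow> ('i \<Rightarrow> 'k) \<Rightarrow> bool" where
  "algebraic_type v I a \<longleftrightarrow>
     (\<not> (\<exists>m\<in>Istar I. \<forall>i\<in>Istar I. i \<le> m)) \<and> (\<exists>f. \<not> fixed_by v I a f)"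

definition min_unfixed ::
  "('k::field \<Rightarrow> 'g::linordered_ab_group_add extended) \<Rightarrow> ('i::wellorder) set \<Rightarrow> ('i \<Rightarrow> 'k) \<Rightarrow> 'k poly \<Rightarrow> bool" where
  "min_unfixed v I a F \<longleftrightarrow>
     lead_coeff F = 1 \<and> \<not> fixed_by v I a F \<and>
     (\<forall>g. \<not> fixed_by v I a g \<longrightarrow> degree F \<le> degree g)"

text \<open>The ultimate value of \<nu>_i(g), i \<in> I* (for deg g < deg F this value exists).\<close>

definition nu_lim ::
  "('k::field \<Rightarrow> 'g::linordered_ab_group_add extended) \<Rightarrow> ('i::wellorder) set \<Rightarrow> ('i \<Rightarrow> 'k) \<Rightarrow> 'k poly \<Rightarrow> 'g extended" where
  "nu_lim v I a g =
     (THE c. \<exists>i0\<in>Istar I. \<forall>i\<in>Istar I. i0 \<le> i \<longrightarrow> nu_i v I a i g = c)"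

text \<open>j-th coefficient of the F-expansion f = \<Sum> f_j F^j with deg f_j < deg F.\<close>

definition Fexp :: "'k::field poly \<Rightarrow> 'k poly \<Rightarrow> nat \<Rightarrow> 'k poly" where
  "Fexp F f j = (f div F ^ j) mod F"

text \<open>\<mu>_{F,\<infinity>}(f) = min_j (\<nu>(f_j) + j\<cdot>\<infinity>) = \<nu>(f_0).\<close>

definition mu_inf ::
  "('k::field \<Rightarrow> 'g::linordered_ab_group_add extended) \<Rightarrow> ('i::wellorder) set \<Rightarrow> ('i \<Rightarrow> 'k) \<Rightarrow> 'k poly \<Rightarrow> 'k poly \<Rightarrow> 'g extended" where
  "mu_inf v I a F f = nu_lim v I a (Fexp F f 0)"

end

theory Submission
  imports Defs
begin

text \<open>A minimal non-fixed monic polynomial G is irreducible: a proper factorisation would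
  write G as a product of two polynomials of smaller degree, which are fixed, and products of
  fixed polynomials are fixed. Another minimal F is monic of the same degree and different from
  G, so G does not divide F, and F is invertible modulo G: F u mod G = 1 for some u. Since
  \<mu>_{F,\<infinity>}(f) is the limit of \<nu>_i on f mod F, and \<nu>_i is v on constants,
  \<mu>_{F,\<infinity>}(F u) = v 0 = \<infinity> whereas \<mu>_{G,\<infinity>}(F u) = v 1 = 0.\<close>

lemma fixed_by_const: "I \<noteq> {} \<Longrightarrow> fixed_by v I a [:c:]"
  unfolding fixed_by_def by auto

lemma fixed_by_mult:
  assumes "valuation v" "fixed_by v I a p" "fixed_by v I a q"
  shows "fixed_by v I a (p * q)"
proof -
  obtain i0 where i0: "i0 \<in> I" "\<forall>i\<in>I. i0 \<le> i \<longrightarrow> v (poly p (a i)) = v (poly p (a i0))"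
    using assms(2) unfolding fixed_by_def by blast
  obtain i1 where i1: "i1 \<in> I" "\<forall>i\<in>I. i1 \<le> i \<longrightarrow> v (poly q (a i)) = v (poly q (a i1))"
    using assms(3) unfolding fixed_by_def by blast
  have v_mult: "\<And>x y. v (x * y) = v x + v y"
    using assms(1) unfolding valuation_def by blast
  define m where "m = max i0 i1"
  have m: "m \<in> I" "i0 \<le> m" "i1 \<le> m"
    using i0 i1 by (auto simp: m_def max_def)
  have "v (poly (p * q) (a i)) = v (poly (p * q) (a m))" if "i \<in> I" "m \<le> i" for i
  proof -
    have "v (poly p (a i)) = v (poly p (a m))" "v (poly q (a i)) = v (poly q (a m))"
      using i0(2) i1(2) m that by (metis order_trans)+
    then show ?thesis
      by (simp add: v_mult)
  qed
  with m(1) show ?thesis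
    unfolding fixed_by_def by blast
qed

lemma pseudo_cauchy_Istar_nonempty:
  assumes "pseudo_cauchy v I a"
  shows "Istar I \<noteq> {}"
proof -
  obtain i j where "i \<in> I" "j \<in> I" "i \<noteq> j"
    using assms unfolding pseudo_cauchy_def by blast
  then have "i < j \<or> j < i"
    by (simp add: neq_iff)
  then show ?thesis
    using \<open>i \<in> I\<close> \<open>j \<in> I\<close> unfolding Istar_def by blast
qed

lemma nu_i_const: "nu_i v I a i [:c:] = v c"
  unfolding nu_i_def vmono_def nat_scale_def by simp

lemma nu_lim_const:
  assumes "Istar I \<noteq> {}"
  shows "nu_lim v I a [:c:] = v c"
  unfolding nu_lim_def nu_i_const
  using assms by (intro the_equality) auto

lemma min_unfixed_irreducible:
  assumes "valuation v" "I \<noteq> {}" "min_unfixed v I a G"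
  shows "irreducible G"
proof -
  have unfixed: "\<not> fixed_by v I a G"
    using assms(3) unfolding min_unfixed_def by blast
  have small_fixed: "fixed_by v I a g" if "degree g < degree G" for g
    using assms(3) that unfolding min_unfixed_def by (meson leD)
  have "degree G \<noteq> 0"
  proof
    assume "degree G = 0"
    then have "G = [:coeff G 0:]"
      by (simp add: degree_0_id)
    then show False
      using unfixed fixed_by_const[OF assms(2), of v a "coeff G 0"] by simp
  qed
  then have "G \<noteq> 0" "\<not> is_unit G"
    by (auto elim!: is_unit_polyE)
  moreover have "is_unit p \<or> is_unit q" if "G = p * q" for p q
  proof (rule ccontr)
    assume "\<not> (is_unit p \<or> is_unit q)"
    moreover have "p \<noteq> 0" "q \<noteq> 0"
      using \<open>G \<noteq> 0\<close> that by auto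
    ultimately have "degree p \<noteq> 0" "degree q \<noteq> 0"
      using is_unit_iff_degree[OF \<open>p \<noteq> 0\<close>] is_unit_iff_degree[OF \<open>q \<noteq> 0\<close>] by blast+
    moreover have "degree G = degree p + degree q"
      using that \<open>p \<noteq> 0\<close> \<open>q \<noteq> 0\<close> by (simp add: degree_mult_eq)
    ultimately have "fixed_by v I a p" "fixed_by v I a q"
      by (auto intro: small_fixed)
    then have "fixed_by v I a G"
      using that fixed_by_mult[OF assms(1)] by simp
    with unfixed show False ..
  qed
  ultimately show ?thesis
    by (auto intro: irreducibleI)
qed

lemma monic_dvd_imp_eq:
  fixes p q :: "'k::field poly"
  assumes "lead_coeff p = 1" "lead_coeff q = 1" "degree p = degree q" "p dvd q"
  shows "p = q"
proof -
  obtain r where q: "q = p * r"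
    using assms(4) by blast
  have "p \<noteq> 0" "r \<noteq> 0"
    using assms(2) q by auto
  then have "degree r = 0"
    using assms(3) q by (simp add: degree_mult_eq)
  then have "r = [:lead_coeff r:]"
    by (simp add: degree_0_id)
  moreover have "lead_coeff r = 1"
    using assms(1,2) q by (simp add: lead_coeff_mult)
  ultimately show ?thesis
    using q by simp
qed

lemma irreducible_poly_mod_inverse:
  fixes f G :: "'k::field poly"
  assumes "irreducible G" "\<not> G dvd f"
  shows "\<exists>u. (f * u) mod G = 1"
proof -
  define residue where "residue r \<longleftrightarrow> r \<noteq> 0 \<and> (\<exists>h. r = (f * h) mod G)" for r
  have "residue (f mod G)"
    using assms(2) unfolding residue_def by (metis dvd_eq_mod_eq_0 mult_1_right)
  then obtain r where "residue r" and r_min: "\<And>s. residue s \<Longrightarrow> degree r \<le> degree s"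
    using ex_has_least_nat[of residue _ degree] by blast
  then obtain h where r: "r \<noteq> 0" "r = (f * h) mod G"
    unfolding residue_def by blast
  have "G \<noteq> 0"
    using assms(1) by auto
  then have deg_r: "degree r < degree G"
    using r by (metis degree_mod_less')
  define q where "q = G div r"
  have "(f * (- q * h)) mod G = (- q * r) mod G"
    unfolding r(2) by (simp add: mod_simps ac_simps)
  also have "\<dots> = (G - q * r) mod G"
    by (simp add: mod_simps)
  also have "\<dots> = (G mod r) mod G"
    by (simp add: q_def minus_div_mult_eq_mod)
  also have "\<dots> = G mod r"
    using deg_r degree_mod_less[OF r(1), of G] by (cases "G mod r = 0") (auto intro!: mod_poly_less)
  finally have G_mod_r: "G mod r = (f * (- q * h)) mod G" ..
  \<comment> \<open>a nonzero residue of least degree divides G, hence is a unit\<close>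
  have "G mod r = 0"
  proof (rule ccontr)
    assume "G mod r \<noteq> 0"
    then have "residue (G mod r)"
      using G_mod_r unfolding residue_def by blast
    then have "degree r \<le> degree (G mod r)"
      by (rule r_min)
    with degree_mod_less'[OF r(1) \<open>G mod r \<noteq> 0\<close>] show False
      by simp
  qed
  then obtain s where G: "G = r * s"
    by (meson mod_eq_0_iff_dvd dvdE)
  have "\<not> is_unit s"
  proof
    assume "is_unit s"
    then have "degree s = 0"
      by (auto elim!: is_unit_polyE)
    with G deg_r \<open>G \<noteq> 0\<close> show False
      by (simp add: degree_mult_eq)
  qed
  then have "is_unit r"
    using assms(1) G irreducibleD by blast
  then obtain w where w: "1 = r * w"
    by (rule dvdE)
  have "(f * (h * w)) mod G = ((f * h) mod G * w) mod G"
    by (simp add: mod_mult_left_eq mult.assoc)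
  also have "\<dots> = 1 mod G"
    using w r(2) by simp
  also have "\<dots> = 1"
    using deg_r by (simp add: mod_poly_less)
  finally show ?thesis ..
qed

theorem mainTheorem10:
  fixes v :: "'k::field \<Rightarrow> 'g::linordered_ab_group_add extended"
    and I :: "'i::wellorder set"
    and a :: "'i \<Rightarrow> 'k"
    and F G :: "'k poly"
  assumes "valuation v"
    and "pseudo_cauchy v I a"
    and "algebraic_type v I a"
    and "min_unfixed v I a F"
    and "min_unfixed v I a G"
    and "F \<noteq> G"
  shows "mu_inf v I a F \<noteq> mu_inf v I a G"
proof -
  have Istar: "Istar I \<noteq> {}"
    using assms(2) by (rule pseudo_cauchy_Istar_nonempty)
  then have "I \<noteq> {}"
    unfolding Istar_def by blast
  have G_irr: "irreducible G"
    using assms(1) \<open>I \<noteq> {}\<close> assms(5) by (rule min_unfixed_irreducible)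
  have "lead_coeff F = 1" "lead_coeff G = 1" "degree G = degree F"
    using assms(4,5) unfolding min_unfixed_def by (auto intro: antisym)
  then have "\<not> G dvd F"
    using assms(6) monic_dvd_imp_eq[of G F] by blast
  with G_irr obtain u where "(F * u) mod G = 1"
    using irreducible_poly_mod_inverse by blast
  then have "mu_inf v I a F (F * u) = v 0" "mu_inf v I a G (F * u) = v 1"
    using nu_lim_const[OF Istar, of v a 0] nu_lim_const[OF Istar, of v a 1]
    by (simp_all add: mu_inf_def Fexp_def pCons_one)
  moreover have "v 0 \<noteq> v 1"
    using assms(1) unfolding valuation_def by (metis zero_neq_one)
  ultimately have "mu_inf v I a F (F * u) \<noteq> mu_inf v I a G (F * u)"
    by simp
  then show ?thesis
    by auto
qed

end
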